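(* Let $s\in\{-1,1\}$ and let $X$ be a hanging set on $J_s$. If $X$ is permeable, then $X$ is a dendrite.
   Context: $J=[-1,1]$, $J_s=J\times\{s\}$, $\stackrel{\circ}{J_s}=(-1,1)\times\{s\}$, $\partial J^2$ the boundary of the square $J^2$. For an arc $I$, $\stackrel{\circ}{I}$ (also $\mathrm{Int}\,I$) is $I$ minus its endpoints; for a disc $D$, $\stackrel{\circ}{D}$ is its interior, $\partial D$ its boundary circle. A hanging set on $J_s$ is a nonempty compact connected $X\subset J^2$ with $X\cap\partial J^2$ a nonempty connected subset of $\stackrel{\circ}{J_s}$. A hutch of $X$ is a disc $D\subset J^2$ which is a hanging set on $J_s$ with $D\cap\partial J^2$ an arc, such that $X\cap J_s\subset\mathrm{Int}(D\cap J_s)$ and $X-J_s\subset\stackrel{\circ}{D}$. $X$ is permeable if for some hutch $D$ of $X$, with $A=D\cap J_s$, there is a continuous $\eta:D\to D$ (a permeating) such that (C.1) $\eta|(\partial D-\stackrel{\circ}{A})=\mathrm{id}$, $\eta(A)=A\cup X$, and there is an arc $A'\subset\stackrel{\circ}{A}$ with $X\cap J_s\subset\mathrm{Int}\,A'$, $\eta(A-A')=A-(X\cap J_s)$, $\eta(A')=X$, $\eta|(A-A')$ injective; (C.2) $\eta(\stackrel{\circ}{D})=\stackrel{\circ}{D}-X$ and $\eta|\stackrel{\circ}{D}$ injective. A dendrite is a locally connected continuum containing no circle. *)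

theory Defs
  imports "HOL-Analysis.Analysis"
begin

text \<open>Points of the plane are pairs of reals (Euclidean norm on the product).\<close>

definition JJ :: "real set" where "JJ = {-1..1}"

definition square :: "(real \<times> real) set" where "square = JJ \<times> JJ"

definition bd_square :: "(real \<times> real) set" where "bd_square = frontier square"

definition Jside :: "real \<Rightarrow> (real \<times> real) set" where "Jside s = JJ \<times> {s}"

definition Jside_open :: "real \<Rightarrow> (real \<times> real) set" where
  "Jside_open s = {-1<..<1} \<times> {s}"

definition arc_ends :: "(real \<times> real) set \<Rightarrow> real \<times> real \<Rightarrow> real \<times> real \<Rightarrow> bool" where
  "arc_ends I a b \<longleftrightarrow> (\<exists>g. arc g \<and> path_image g = I \<and> pathstart g = a \<and> pathfinish g = b)"

definition is_arc :: "(real \<times> real) set \<Rightarrow> bool" where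
  "is_arc I \<longleftrightarrow> (\<exists>a b. arc_ends I a b)"

definition arc_interior :: "(real \<times> real) set \<Rightarrow> (real \<times> real) set" where
  "arc_interior I = {x \<in> I. \<forall>a b. arc_ends I a b \<longrightarrow> x \<noteq> a \<and> x \<noteq> b}"

text \<open>A disc: a set homeomorphic to the closed unit disc. Its interior and boundary circle
  are the topological interior and frontier in the plane.\<close>
definition is_disc :: "(real \<times> real) set \<Rightarrow> bool" where
  "is_disc D \<longleftrightarrow> D homeomorphic cball (0::real \<times> real) 1"

definition hanging_set :: "real \<Rightarrow> (real \<times> real) set \<Rightarrow> bool" where
  "hanging_set s X \<longleftrightarrow> X \<noteq> {} \<and> compact X \<and> connected X \<and> X \<subseteq> square \<and>
     X \<inter> bd_square \<noteq> {} \<and> connected (X \<inter> bd_square) \<and> X \<inter> bd_square \<subseteq> Jside_open s"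

definition hutch :: "real \<Rightarrow> (real \<times> real) set \<Rightarrow> (real \<times> real) set \<Rightarrow> bool" where
  "hutch s X D \<longleftrightarrow> is_disc D \<and> D \<subseteq> square \<and> hanging_set s D \<and> is_arc (D \<inter> bd_square) \<and>
     X \<inter> Jside s \<subseteq> arc_interior (D \<inter> Jside s) \<and> X - Jside s \<subseteq> interior D"

definition permeating :: "real \<Rightarrow> (real \<times> real) set \<Rightarrow> (real \<times> real) set
    \<Rightarrow> ((real \<times> real) \<Rightarrow> (real \<times> real)) \<Rightarrow> bool" where
  "permeating s X D \<eta> \<longleftrightarrow>
     (let A = D \<inter> Jside s in
       continuous_on D \<eta> \<and> \<eta> ` D \<subseteq> D \<and>
       \<comment> \<open>(C.1)\<close>
       (\<forall>x \<in> frontier D - arc_interior A. \<eta> x = x) \<and>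
       \<eta> ` A = A \<union> X \<and>
       (\<exists>A'. is_arc A' \<and> A' \<subseteq> arc_interior A \<and> X \<inter> Jside s \<subseteq> arc_interior A' \<and>
             \<eta> ` (A - A') = A - (X \<inter> Jside s) \<and> \<eta> ` A' = X \<and> inj_on \<eta> (A - A')) \<and>
       \<comment> \<open>(C.2)\<close>
       \<eta> ` interior D = interior D - X \<and> inj_on \<eta> (interior D))"

definition permeable :: "real \<Rightarrow> (real \<times> real) set \<Rightarrow> bool" where
  "permeable s X \<longleftrightarrow> (\<exists>D \<eta>. hutch s X D \<and> permeating s X D \<eta>)"

definition dendrite :: "(real \<times> real) set \<Rightarrow> bool" where
  "dendrite X \<longleftrightarrow> X \<noteq> {} \<and> compact X \<and> connected X \<and> locally connected X \<and>
     \<not> (\<exists>C \<subseteq> X. C homeomorphic sphere (0::real \<times> real) 1)"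

end

theory Submission
  imports Defs
begin

(* The permeating \<eta> maps the arc A' onto X, so X is a path image and hence a Peano continuum.
   Since \<eta> maps interior D onto interior D - X and D is the closure of its interior, X has
   empty interior and interior D - X is connected. A circle C in X must meet interior D, because
   X - J_s lies in interior D and a segment contains no circle. Then the inside of C (contained
   in D, as the complement of the disc is connected) and the outside of C (whose frontier is C)
   both meet the connected set interior D - X, which misses C: impossible. *)

lemma locally_connected_path_image:
  fixes g :: "real \<Rightarrow> 'a::t2_space"
  assumes "path g"
  shows "locally connected (path_image g)"
  unfolding path_image_def
proof (rule locally_connected_quotient_image)
  show "locally connected {0..1::real}"
    by (simp add: convex_imp_locally_connected)
  have cont: "continuous_on {0..1} g"
    using assms by (simp add: path_def)
  fix T
  assume "T \<subseteq> g ` {0..1}"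
  then show "openin (top_of_set {0..1}) ({0..1} \<inter> g -` T) \<longleftrightarrow> openin (top_of_set (g ` {0..1})) T"
    by (rule Abstract_Topology_2.continuous_imp_quotient_map[OF cont refl compact_Icc])
qed

lemma connected_subset_inside_or_outside:
  fixes C :: "'a::real_normed_vector set"
  assumes "closed C" "connected S" "S \<inter> C = {}"
  shows "S \<subseteq> inside C \<or> S \<subseteq> outside C"
proof -
  have cover: "S \<subseteq> inside C \<union> outside C"
    using assms(3) by auto
  then have "inside C \<inter> S = {} \<or> outside C \<inter> S = {}"
    using connectedD[OF assms(2) open_inside[OF assms(1)] open_outside[OF assms(1)]] by auto
  then show ?thesis
    using cover by blast
qed

lemma compact_homeomorphic_sphere:
  fixes C :: "'a::euclidean_space set" and a :: 'a
  assumes "C homeomorphic sphere a r"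
  shows "compact C"
  using homeomorphic_compactness[OF assms] by simp

lemma inside_subset_interior:
  fixes C :: "'a::real_normed_vector set"
  assumes "closed C" "C \<subseteq> T" "inside T = {}"
  shows "inside C \<subseteq> interior T"
  using inside_mono[OF assms(2)] assms(3) open_inside[OF assms(1)] by (simp add: interior_maximal)

lemma inside_homeomorphic_sphere_nonempty:
  fixes C :: "'a::euclidean_space set" and a :: 'a
  assumes "C homeomorphic sphere a r" "0 < r" "2 \<le> DIM('a)"
  shows "inside C \<noteq> {}"
proof
  assume "inside C = {}"
  then have "outside C = - C"
    using inside_Un_outside[of C] by simp
  moreover have "bounded C"
    using compact_homeomorphic_sphere[OF assms(1)] by (rule compact_imp_bounded)
  ultimately have "connected (- C)"
    using connected_outside[OF _ assms(3)] by metis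
  then show False
    using Jordan_Brouwer_separation[OF assms(1,2)] by blast
qed

lemma frontier_outside_homeomorphic_sphere:
  fixes C :: "'a::euclidean_space set" and a :: 'a
  assumes "C homeomorphic sphere a r" "2 \<le> DIM('a)"
  shows "frontier (outside C) = C"
proof -
  have "bounded C"
    using compact_homeomorphic_sphere[OF assms(1)] by (rule compact_imp_bounded)
  then have "outside C \<in> components (- C)"
    by (simp add: outside_in_components connected_outside[OF _ assms(2)] outside_bounded_nonempty)
  then show ?thesis
    by (rule Jordan_Brouwer_frontier[OF assms(1) _ assms(2)])
qed

lemma homeomorphic_sphere_subset_convex_imp_interior_nonempty:
  fixes C :: "'a::euclidean_space set" and a :: 'a
  assumes "C homeomorphic sphere a r" "0 < r" "2 \<le> DIM('a)" "convex T" "C \<subseteq> T"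
  shows "interior T \<noteq> {}"
proof -
  have "closed C"
    using compact_homeomorphic_sphere[OF assms(1)] by (rule compact_imp_closed)
  then have "inside C \<subseteq> interior T"
    using inside_subset_interior assms(4,5) inside_convex by blast
  then show ?thesis
    using inside_homeomorphic_sphere_nonempty[OF assms(1-3)] by blast
qed

lemma sphere_in_nonseparating_set_misses_interior:
  fixes C D X :: "'a::euclidean_space set" and a :: 'a
  assumes hom: "C homeomorphic sphere a r" "0 < r" "2 \<le> DIM('a)"
    and D: "bounded D" "connected (- D)"
    and X: "C \<subseteq> X" "X \<subseteq> D" "interior X = {}" "connected (interior D - X)"
  shows "C \<inter> interior D = {}"
proof (rule ccontr)
  assume "C \<inter> interior D \<noteq> {}"
  then obtain c where c: "c \<in> C" "c \<in> interior D" by blast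
  have "closed C"
    using compact_homeomorphic_sphere[OF hom(1)] by (rule compact_imp_closed)
  have not_in_X: "\<exists>y \<in> V. y \<notin> X" if "open V" "V \<noteq> {}" for V
    using that X(3) interior_maximal by blast
  have "inside C \<subseteq> interior D"
    using X(1,2) inside_bounded_complement_connected_empty[OF D(2,1)]
    by (intro inside_subset_interior[OF \<open>closed C\<close>]) auto
  then obtain u where u: "u \<in> interior D - X" "u \<in> inside C"
    using not_in_X[OF open_inside[OF \<open>closed C\<close>] inside_homeomorphic_sphere_nonempty[OF hom]] by blast
  have "c \<in> closure (outside C)"
    using c(1) frontier_outside_homeomorphic_sphere[OF hom(1,3)] unfolding frontier_def by blast
  then have "interior D \<inter> outside C \<noteq> {}"
    using c(2) open_Int_closure_eq_empty[of "interior D" "outside C"] by blast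
  then obtain w where w: "w \<in> interior D - X" "w \<in> outside C"
    using not_in_X[OF open_Int[OF open_interior open_outside[OF \<open>closed C\<close>]]] by blast
  have "interior D - X \<subseteq> inside C \<or> interior D - X \<subseteq> outside C"
    using connected_subset_inside_or_outside[OF \<open>closed C\<close> X(4)] X(1) by blast
  then show False
    using u w inside_Int_outside by blast
qed

lemma homeomorphic_cball_dense_open_connected_subset:
  fixes D :: "'a::euclidean_space set" and a :: 'a
  assumes "D homeomorphic cball a r" "0 < r"
  obtains U where "open U" "connected U" "U \<subseteq> D" "D \<subseteq> closure U"
proof -
  obtain h k where hk: "homeomorphism (cball a r) D h k"
    using assms(1) homeomorphic_sym unfolding homeomorphic_def by blast
  then have cont: "continuous_on (cball a r) h" and img: "h ` cball a r = D"
    and inj: "inj_on h (cball a r)"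
    unfolding homeomorphism_def inj_on_def by metis+
  show thesis
  proof
    show "open (h ` ball a r)"
      using invariance_of_domain_ball[OF cont assms(2) inj] .
    show "connected (h ` ball a r)"
      using connected_continuous_image[OF continuous_on_subset[OF cont ball_subset_cball]] by simp
    show "h ` ball a r \<subseteq> D"
      using img ball_subset_cball by blast
    have "D = h ` closure (ball a r)"
      using img assms(2) by simp
    also have "\<dots> \<subseteq> closure (h ` ball a r)"
      by (rule continuous_image_closure_subset[OF cont]) (simp add: assms(2))
    finally show "D \<subseteq> closure (h ` ball a r)" .
  qed
qed

lemma closure_interior_homeomorphic_cball:
  fixes D :: "'a::euclidean_space set" and a :: 'a
  assumes "D homeomorphic cball a r" "0 < r"
  shows "closure (interior D) = D"
proof -
  obtain U where "open U" "U \<subseteq> D" "D \<subseteq> closure U"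
    using homeomorphic_cball_dense_open_connected_subset[OF assms] by metis
  moreover have "closed D"
    using homeomorphic_compactness[OF assms(1)] by (simp add: compact_imp_closed)
  ultimately show ?thesis
    by (meson closure_minimal closure_mono interior_maximal interior_subset subset_antisym subset_trans)
qed

lemma connected_interior_homeomorphic_cball:
  fixes D :: "'a::euclidean_space set" and a :: 'a
  assumes "D homeomorphic cball a r" "0 < r"
  shows "connected (interior D)"
proof -
  obtain U where "open U" "connected U" "U \<subseteq> D" "D \<subseteq> closure U"
    using homeomorphic_cball_dense_open_connected_subset[OF assms] by metis
  then show ?thesis
    by (meson connected_intermediate_closure interior_maximal interior_subset subset_trans)
qed

lemma permeatingD:
  assumes "permeating s X D \<eta>"
  shows "continuous_on D \<eta>" "\<eta> ` D \<subseteq> D" "\<eta> ` interior D = interior D - X"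
    and "\<exists>A'. is_arc A' \<and> A' \<subseteq> D \<and> \<eta> ` A' = X"
proof -
  obtain A' where "continuous_on D \<eta>" "\<eta> ` D \<subseteq> D" "\<eta> ` interior D = interior D - X"
    "is_arc A'" "A' \<subseteq> arc_interior (D \<inter> Jside s)" "\<eta> ` A' = X"
    using assms unfolding permeating_def Let_def by (elim conjE exE) simp
  moreover have "arc_interior (D \<inter> Jside s) \<subseteq> D"
    unfolding arc_interior_def by blast
  ultimately show "continuous_on D \<eta>" "\<eta> ` D \<subseteq> D" "\<eta> ` interior D = interior D - X"
    "\<exists>A'. is_arc A' \<and> A' \<subseteq> D \<and> \<eta> ` A' = X"
    by blast+
qed

lemma permeating_path_image:
  assumes "permeating s X D \<eta>"
  obtains g where "path g" "path_image g = X"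
proof -
  obtain A' p where p: "arc p" "path_image p = A'" and A': "A' \<subseteq> D" "\<eta> ` A' = X"
    using permeatingD(4)[OF assms] unfolding is_arc_def arc_ends_def by blast
  have "path (\<eta> \<circ> p)"
    using p A'(1) continuous_on_subset[OF permeatingD(1)[OF assms]]
    by (intro path_continuous_image arc_imp_path) auto
  moreover have "path_image (\<eta> \<circ> p) = X"
    using p(2) A'(2) by (simp add: path_image_compose)
  ultimately show thesis
    by (rule that)
qed

lemma permeating_interior_empty:
  assumes "is_disc D" "permeating s X D \<eta>"
  shows "interior X = {}"
proof -
  have cl: "closure (interior D) = D"
    using closure_interior_homeomorphic_cball assms(1) unfolding is_disc_def by fastforce
  have "X \<subseteq> \<eta> ` D"
    using permeatingD(4)[OF assms(2)] by blast
  also have "\<dots> = \<eta> ` closure (interior D)"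
    using cl by simp
  also have "\<dots> \<subseteq> closure (\<eta> ` interior D)"
    by (rule continuous_image_closure_subset[OF permeatingD(1)[OF assms(2)]]) (simp add: cl)
  also have "\<dots> \<subseteq> closure (- X)"
    using permeatingD(3)[OF assms(2)] by (simp add: closure_mono Diff_subset_conv)
  finally have "closure (- X) = UNIV"
    using closure_subset[of "- X"] by blast
  then show ?thesis
    using interior_complement[of "- X"] by simp
qed

lemma permeating_connected_interior_diff:
  assumes "is_disc D" "permeating s X D \<eta>"
  shows "connected (interior D - X)"
proof -
  have "connected (interior D)"
    using connected_interior_homeomorphic_cball assms(1) unfolding is_disc_def by fastforce
  then have "connected (\<eta> ` interior D)"
    using continuous_on_subset[OF permeatingD(1)[OF assms(2)] interior_subset]
    by (rule connected_continuous_image[rotated])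
  then show ?thesis
    using permeatingD(3)[OF assms(2)] by simp
qed

lemma convex_Jside: "convex (Jside s)"
  by (simp add: Jside_def JJ_def convex_Times)

lemma interior_Jside: "interior (Jside s) = {}"
  by (simp add: Jside_def interior_Times)

theorem proposition4p5:
  fixes s :: real and X :: "(real \<times> real) set"
  assumes "s \<in> {-1, 1}"
    and "hanging_set s X"
    and "permeable s X"
  shows "dendrite X"
proof -
  obtain D \<eta> where "hutch s X D" and per: "permeating s X D \<eta>"
    using assms(3) unfolding permeable_def by blast
  then have disc: "is_disc D" and XJ: "X - Jside s \<subseteq> interior D"
    unfolding hutch_def by blast+
  obtain g where "path g" "path_image g = X"
    using permeating_path_image[OF per] .
  then have peano: "X \<noteq> {}" "compact X" "connected X" "locally connected X"
    using compact_path_image connected_path_image path_image_nonempty locally_connected_path_image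
    by blast+
  have hom_D: "D homeomorphic cball (0::real \<times> real) 1"
    using disc unfolding is_disc_def .
  then have D: "bounded D" "connected (- D)"
    using homeomorphic_compactness[OF hom_D] connected_complement_homeomorphic_convex_compact[OF hom_D]
    by (simp_all add: compact_imp_bounded)
  have XD: "X \<subseteq> D"
    using permeatingD(2,4)[OF per] by blast
  have no_circle: "\<not> C homeomorphic sphere (0::real \<times> real) 1" if "C \<subseteq> X" for C
  proof
    assume hom: "C homeomorphic sphere (0::real \<times> real) 1"
    have "C \<inter> interior D = {}"
      by (rule sphere_in_nonseparating_set_misses_interior[OF hom _ _ D that XD
            permeating_interior_empty[OF disc per] permeating_connected_interior_diff[OF disc per]])
        simp_all
    then have "C \<subseteq> Jside s"
      using that XJ by blast
    then have "interior (Jside s) \<noteq> {}"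
      using homeomorphic_sphere_subset_convex_imp_interior_nonempty[OF hom _ _ convex_Jside] by simp
    then show False
      by (simp add: interior_Jside)
  qed
  show ?thesis
    unfolding dendrite_def using peano no_circle by blast
qed

end
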